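(* Let $X$ be an Alexandroff space, $Y$ a topological space, and $f:X\to Y$ an arbitrary map. The following are equivalent: (i) $f$ has closed graph; (ii) for every connected component $C$ of $X$, $f(C)$ is a singleton closed subset of $Y$; (iii) for every $x\in X$, $f([x]_{\Re_X})$ is a singleton closed subset of $Y$. Moreover, if these hold then $f$ is continuous.
   Context: For a map $f:X\to Y$ its graph is $G_f=\{(x,f(x)):x\in X\}$; $f$ has closed graph if $G_f$ is closed in $X\times Y$ (product topology). A topological space $X$ is an Alexandroff space if the intersection of every nonempty family of open subsets of $X$ is open; equivalently, every point $a\in X$ has a smallest open neighbourhood, denoted $V_a$. On an Alexandroff space $X$ define the relation $\Re_X$ by: $(x,y)\in\Re_X$ iff there exist $x=x_1,x_2,\ldots,x_n=y$ in $X$ with $V_{x_i}\cap V_{x_{i+1}}\neq\emptyset$ for all $i\in\{1,\ldots,n-1\}$. This is an equivalence relation, and $[x]_{\Re_X}=\{y\in X:(x,y)\in\Re_X\}$ denotes the equivalence class of $x$. *)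

theory Defs
  imports "HOL-Analysis.Analysis"
begin

definition alexandroff_space :: "'a topology \<Rightarrow> bool" where
  "alexandroff_space X \<longleftrightarrow>
     (\<forall>\<U>. \<U> \<noteq> {} \<and> (\<forall>U\<in>\<U>. openin X U) \<longrightarrow> openin X (\<Inter>\<U>))"

definition min_nbhd :: "'a topology \<Rightarrow> 'a \<Rightarrow> 'a set" where
  "min_nbhd X a = \<Inter>{U. openin X U \<and> a \<in> U}"

definition alex_adj :: "'a topology \<Rightarrow> 'a \<Rightarrow> 'a \<Rightarrow> bool" where
  "alex_adj X x y \<longleftrightarrow> x \<in> topspace X \<and> y \<in> topspace X \<and> min_nbhd X x \<inter> min_nbhd X y \<noteq> {}"

text \<open>The relation Re_X: chains x = x1, ..., xn = y with consecutive minimal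
  neighbourhoods intersecting (n = 1 gives reflexivity).\<close>
definition alex_rel :: "'a topology \<Rightarrow> 'a \<Rightarrow> 'a \<Rightarrow> bool" where
  "alex_rel X = (alex_adj X)\<^sup>*\<^sup>*"

definition alex_class :: "'a topology \<Rightarrow> 'a \<Rightarrow> 'a set" where
  "alex_class X x = {y \<in> topspace X. alex_rel X x y}"

definition graph_of :: "'a topology \<Rightarrow> ('a \<Rightarrow> 'b) \<Rightarrow> ('a \<times> 'b) set" where
  "graph_of X f = {(x, f x) | x. x \<in> topspace X}"

definition closed_graph :: "'a topology \<Rightarrow> 'b topology \<Rightarrow> ('a \<Rightarrow> 'b) \<Rightarrow> bool" where
  "closed_graph X Y f \<longleftrightarrow> closedin (prod_topology X Y) (graph_of X f)"

definition singleton_closed :: "'b topology \<Rightarrow> 'b set \<Rightarrow> bool" where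
  "singleton_closed Y S \<longleftrightarrow> (\<exists>y. S = {y} \<and> closedin Y {y})"

end

theory Submission
  imports Defs
begin

text \<open>Every smallest open neighbourhood \<open>V\<^sub>a\<close> is connected, since any open set containing \<open>a\<close>
  contains all of it. Hence adjacent points lie in the connected set \<open>V\<^sub>x \<union> V\<^sub>y\<close>, and every
  \<open>\<Re>\<^sub>X\<close>-class lies in a connected component. In an Alexandroff space a class contains \<open>V\<^sub>z\<close>
  for each of its points, and so does its complement, so classes are clopen and therefore
  exactly the components. A closed graph has closed fibres, which forces \<open>f\<close> to be constant
  on each \<open>V\<^sub>a\<close> and hence on each class; its values are closed as slices of the graph.
  Conversely a map that is constant on the open classes with closed values has closed graph,
  and being locally constant it is continuous.\<close>

lemma mem_min_nbhd: "a \<in> min_nbhd X a"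
  unfolding min_nbhd_def by auto

lemma min_nbhd_subset: "openin X U \<Longrightarrow> a \<in> U \<Longrightarrow> min_nbhd X a \<subseteq> U"
  unfolding min_nbhd_def by auto

lemma min_nbhd_subset_topspace: "a \<in> topspace X \<Longrightarrow> min_nbhd X a \<subseteq> topspace X"
  by (simp add: min_nbhd_subset)

lemma connectedin_min_nbhd:
  assumes "a \<in> topspace X"
  shows "connectedin X (min_nbhd X a)"
  unfolding connectedin
proof (intro conjI notI)
  show "min_nbhd X a \<subseteq> topspace X" using assms by (rule min_nbhd_subset_topspace)
  assume "\<exists>E1 E2. openin X E1 \<and> openin X E2 \<and> min_nbhd X a \<subseteq> E1 \<union> E2 \<and>
    E1 \<inter> E2 \<inter> min_nbhd X a = {} \<and> E1 \<inter> min_nbhd X a \<noteq> {} \<and> E2 \<inter> min_nbhd X a \<noteq> {}"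
  then obtain E1 E2 where E: "openin X E1" "openin X E2" "min_nbhd X a \<subseteq> E1 \<union> E2"
    "E1 \<inter> E2 \<inter> min_nbhd X a = {}" "E1 \<inter> min_nbhd X a \<noteq> {}" "E2 \<inter> min_nbhd X a \<noteq> {}"
    by blast
  have "a \<in> E1 \<or> a \<in> E2"
    using E(3) mem_min_nbhd[of a X] by blast
  then have "min_nbhd X a \<subseteq> E1 \<or> min_nbhd X a \<subseteq> E2"
    using E(1,2) min_nbhd_subset[of X E1 a] min_nbhd_subset[of X E2 a] by blast
  then show False
    using E(4-6) by auto
qed

lemma alex_adj_sym: "alex_adj X x y \<Longrightarrow> alex_adj X y x"
  unfolding alex_adj_def by blast

lemma alex_adj_if_mem_min_nbhd:
  assumes "a \<in> topspace X" and "b \<in> min_nbhd X a"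
  shows "alex_adj X a b"
proof -
  have "b \<in> topspace X"
    using min_nbhd_subset_topspace[OF assms(1)] assms(2) by blast
  then show ?thesis
    unfolding alex_adj_def using assms mem_min_nbhd[of b X] by blast
qed

lemma mem_alex_class_self: "x \<in> topspace X \<Longrightarrow> x \<in> alex_class X x"
  unfolding alex_class_def alex_rel_def by simp

lemma alex_class_closed_under_adj:
  assumes "y \<in> alex_class X x" and "alex_adj X y z"
  shows "z \<in> alex_class X x"
proof -
  have "z \<in> topspace X"
    using assms(2) by (simp add: alex_adj_def)
  moreover have "alex_rel X x z"
    using assms unfolding alex_class_def alex_rel_def by (auto intro: rtranclp.rtrancl_into_rtrancl)
  ultimately show ?thesis
    by (simp add: alex_class_def)
qed

lemma connected_component_of_if_alex_adj:
  assumes "alex_adj X x y"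
  shows "connected_component_of X x y"
proof -
  have x: "x \<in> topspace X" and y: "y \<in> topspace X"
    and meet: "min_nbhd X x \<inter> min_nbhd X y \<noteq> {}"
    using assms unfolding alex_adj_def by auto
  have "connectedin X (min_nbhd X x \<union> min_nbhd X y)"
    using connectedin_Un[OF connectedin_min_nbhd[OF x] connectedin_min_nbhd[OF y] meet] .
  moreover have "x \<in> min_nbhd X x \<union> min_nbhd X y" "y \<in> min_nbhd X x \<union> min_nbhd X y"
    using mem_min_nbhd[of x X] mem_min_nbhd[of y X] by auto
  ultimately show ?thesis
    unfolding connected_component_of_def by blast
qed

lemma connected_component_of_if_alex_rel:
  assumes "x \<in> topspace X" and "alex_rel X x y"
  shows "connected_component_of X x y"
  using assms(2) unfolding alex_rel_def
proof (induction rule: rtranclp_induct)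
  case base
  show ?case using assms(1) connected_component_of_refl by fast
next
  case (step y z)
  then show ?case
    using connected_component_of_trans connected_component_of_if_alex_adj by metis
qed

lemma closed_graph_imp_closedin_fibre:
  assumes "closed_graph X Y f" and "c \<in> topspace Y"
  shows "closedin X {x \<in> topspace X. f x = c}"
proof -
  have "continuous_map X (prod_topology X Y) (\<lambda>x. (x, c))"
    using assms(2) by (simp add: continuous_map_paired)
  from closedin_continuous_map_preimage[OF this assms(1)[unfolded closed_graph_def]]
  have "closedin X {x \<in> topspace X. (x, c) \<in> graph_of X f}" .
  moreover have "{x \<in> topspace X. (x, c) \<in> graph_of X f} = {x \<in> topspace X. f x = c}"
    by (auto simp: graph_of_def)
  ultimately show ?thesis
    by simp
qed

lemma closed_graph_imp_closedin_value:
  assumes "closed_graph X Y f" and "x \<in> topspace X"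
  shows "closedin Y {f x}"
proof -
  have "continuous_map Y (prod_topology X Y) (\<lambda>y. (x, y))"
    using assms(2) by (simp add: continuous_map_paired)
  from closedin_continuous_map_preimage[OF this assms(1)[unfolded closed_graph_def]]
  have "closedin Y {y \<in> topspace Y. (x, y) \<in> graph_of X f}" .
  moreover have "f x \<in> topspace Y"
    using closedin_subset[OF assms(1)[unfolded closed_graph_def]] assms(2)
    by (auto simp: graph_of_def)
  then have "{y \<in> topspace Y. (x, y) \<in> graph_of X f} = {f x}"
    using assms(2) by (auto simp: graph_of_def)
  ultimately show ?thesis
    by simp
qed

lemma closed_graph_eq_on_min_nbhd:
  assumes "closed_graph X Y f" and "f ` topspace X \<subseteq> topspace Y"
    and x: "x \<in> topspace X" and "z \<in> min_nbhd X x"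
  shows "f z = f x"
proof (rule ccontr)
  assume "f z \<noteq> f x"
  have z: "z \<in> topspace X"
    using min_nbhd_subset_topspace[OF x] assms(4) by blast
  let ?F = "{w \<in> topspace X. f w = f z}"
  have "closedin X ?F"
    using closed_graph_imp_closedin_fibre[OF assms(1)] assms(2) z by blast
  then have "openin X (topspace X - ?F)"
    by (simp add: closedin_def)
  moreover have "x \<in> topspace X - ?F"
    using x \<open>f z \<noteq> f x\<close> by simp
  ultimately have "min_nbhd X x \<subseteq> topspace X - ?F"
    by (rule min_nbhd_subset)
  then show False
    using assms(4) z by blast
qed

lemma closed_graph_eq_on_alex_rel:
  assumes "closed_graph X Y f" and "f ` topspace X \<subseteq> topspace Y" and "alex_rel X x y"
  shows "f y = f x"
  using assms(3) unfolding alex_rel_def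
proof (induction rule: rtranclp_induct)
  case (step y z)
  then obtain w where "y \<in> topspace X" "z \<in> topspace X" "w \<in> min_nbhd X y" "w \<in> min_nbhd X z"
    unfolding alex_adj_def by blast
  then have "f w = f y" "f w = f z"
    using closed_graph_eq_on_min_nbhd[OF assms(1,2)] by blast+
  then show ?case
    using step.IH by simp
qed simp

lemma closed_graph_if_locally_constant:
  assumes "f ` topspace X \<subseteq> topspace Y"
    and const: "\<And>x. x \<in> topspace X \<Longrightarrow> \<exists>U. openin X U \<and> x \<in> U \<and> (\<forall>z\<in>U. f z = f x)"
    and closed: "\<And>x. x \<in> topspace X \<Longrightarrow> closedin Y {f x}"
  shows "closed_graph X Y f"
proof -
  let ?G = "graph_of X f"
  have "openin (prod_topology X Y) (topspace (prod_topology X Y) - ?G)"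
    unfolding openin_prod_topology_alt
  proof (intro allI impI)
    fix a b assume "(a, b) \<in> topspace (prod_topology X Y) - ?G"
    then have a: "a \<in> topspace X" and b: "b \<in> topspace Y - {f a}"
      by (auto simp: graph_of_def)
    obtain U where U: "openin X U" "a \<in> U" "\<forall>z\<in>U. f z = f a"
      using const[OF a] by blast
    have "openin Y (topspace Y - {f a})"
      using closed[OF a] by (simp add: closedin_def)
    moreover have "U \<times> (topspace Y - {f a}) \<subseteq> topspace (prod_topology X Y) - ?G"
      using U(3) openin_subset[OF U(1)] by (auto simp: graph_of_def)
    ultimately show "\<exists>U V. openin X U \<and> openin Y V \<and> a \<in> U \<and> b \<in> V \<and>
        U \<times> V \<subseteq> topspace (prod_topology X Y) - ?G"
      using U(1,2) b by blast
  qed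
  moreover have "?G \<subseteq> topspace (prod_topology X Y)"
    using assms(1) by (auto simp: graph_of_def)
  ultimately show ?thesis
    unfolding closed_graph_def closedin_def by blast
qed

lemma continuous_map_if_locally_constant:
  assumes "f ` topspace X \<subseteq> topspace Y"
    and const: "\<And>x. x \<in> topspace X \<Longrightarrow> \<exists>U. openin X U \<and> x \<in> U \<and> (\<forall>z\<in>U. f z = f x)"
  shows "continuous_map X Y f"
  unfolding continuous_map_def
proof (intro conjI allI impI)
  show "f \<in> topspace X \<rightarrow> topspace Y"
    using assms(1) by blast
  fix V
  show "openin X {x \<in> topspace X. f x \<in> V}"
  proof (subst openin_subopen, intro ballI)
    fix x assume x: "x \<in> {x \<in> topspace X. f x \<in> V}"
    then obtain U where U: "openin X U" "x \<in> U" "\<forall>z\<in>U. f z = f x"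
      using const by blast
    have "U \<subseteq> {x \<in> topspace X. f x \<in> V}"
      using x U(3) openin_subset[OF U(1)] by auto
    then show "\<exists>T. openin X T \<and> x \<in> T \<and> T \<subseteq> {x \<in> topspace X. f x \<in> V}"
      using U(1,2) by blast
  qed
qed

lemma singleton_closed_image_iff:
  assumes "a \<in> S"
  shows "singleton_closed Y (f ` S) \<longleftrightarrow> (\<forall>z\<in>S. f z = f a) \<and> closedin Y {f a}"
proof
  assume "singleton_closed Y (f ` S)"
  then obtain y where y: "f ` S = {y}" "closedin Y {y}"
    unfolding singleton_closed_def by blast
  then have "\<forall>z\<in>S. f z = y"
    by blast
  then show "(\<forall>z\<in>S. f z = f a) \<and> closedin Y {f a}"
    using y(2) assms by metis
next
  assume const: "(\<forall>z\<in>S. f z = f a) \<and> closedin Y {f a}"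
  then have "f ` S = {f a}"
    using assms by (intro subset_antisym) (blast, blast)
  then show "singleton_closed Y (f ` S)"
    using const unfolding singleton_closed_def by blast
qed

context
  fixes X :: "'a topology"
  assumes alex: "alexandroff_space X"
begin

lemma openin_min_nbhd:
  assumes "a \<in> topspace X"
  shows "openin X (min_nbhd X a)"
proof -
  have "{U. openin X U \<and> a \<in> U} \<noteq> {}"
    using assms openin_topspace[of X] by blast
  then have "openin X (\<Inter>{U. openin X U \<and> a \<in> U})"
    by (intro alex[unfolded alexandroff_space_def, rule_format] conjI) auto
  then show ?thesis
    by (simp only: min_nbhd_def)
qed

lemma openin_if_closed_under_alex_adj:
  assumes "S \<subseteq> topspace X" and closed: "\<And>a b. a \<in> S \<Longrightarrow> alex_adj X a b \<Longrightarrow> b \<in> S"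
  shows "openin X S"
proof (subst openin_subopen, intro ballI)
  fix a assume "a \<in> S"
  then have a: "a \<in> topspace X"
    using assms(1) by blast
  have "min_nbhd X a \<subseteq> S"
    using closed[OF \<open>a \<in> S\<close>] alex_adj_if_mem_min_nbhd[OF a] by blast
  then show "\<exists>T. openin X T \<and> a \<in> T \<and> T \<subseteq> S"
    using openin_min_nbhd[OF a] mem_min_nbhd[of a X] by blast
qed

lemma openin_alex_class: "openin X (alex_class X x)"
proof (rule openin_if_closed_under_alex_adj)
  show "alex_class X x \<subseteq> topspace X"
    by (simp add: alex_class_def)
qed (rule alex_class_closed_under_adj)

lemma closedin_alex_class: "closedin X (alex_class X x)"
proof -
  have "openin X (topspace X - alex_class X x)"
  proof (rule openin_if_closed_under_alex_adj)
    fix a b assume a: "a \<in> topspace X - alex_class X x" and ab: "alex_adj X a b"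
    have "b \<in> topspace X"
      using ab by (simp add: alex_adj_def)
    moreover have "b \<notin> alex_class X x"
      using alex_class_closed_under_adj[OF _ alex_adj_sym[OF ab]] a by blast
    ultimately show "b \<in> topspace X - alex_class X x"
      by blast
  qed simp
  then show ?thesis
    by (simp add: closedin_def alex_class_def)
qed

lemma connected_component_of_set_eq_alex_class:
  assumes "x \<in> topspace X"
  shows "connected_component_of_set X x = alex_class X x"
proof
  show "alex_class X x \<subseteq> connected_component_of_set X x"
    using connected_component_of_if_alex_rel[OF assms] by (simp add: alex_class_def subset_iff)
  have "\<not> disjnt (connected_component_of_set X x) (alex_class X x)"
    using mem_alex_class_self[OF assms] connected_component_of_refl[of X x] assms
    unfolding disjnt_iff by blast
  then show "connected_component_of_set X x \<subseteq> alex_class X x"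
    using connectedin_clopen_cases[OF connectedin_connected_component_of
        closedin_alex_class openin_alex_class] by blast
qed


lemma closed_graph_iff_constant_on_alex_classes:
  assumes "f ` topspace X \<subseteq> topspace Y"
  shows "closed_graph X Y f \<longleftrightarrow>
    (\<forall>x\<in>topspace X. (\<forall>z\<in>alex_class X x. f z = f x) \<and> closedin Y {f x})"
proof
  assume graph: "closed_graph X Y f"
  show "\<forall>x\<in>topspace X. (\<forall>z\<in>alex_class X x. f z = f x) \<and> closedin Y {f x}"
    using closed_graph_eq_on_alex_rel[OF graph assms] closed_graph_imp_closedin_value[OF graph]
    unfolding alex_class_def by blast
next
  assume classes: "\<forall>x\<in>topspace X. (\<forall>z\<in>alex_class X x. f z = f x) \<and> closedin Y {f x}"
  show "closed_graph X Y f"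
  proof (rule closed_graph_if_locally_constant[OF assms])
    fix x assume x: "x \<in> topspace X"
    then show "\<exists>U. openin X U \<and> x \<in> U \<and> (\<forall>z\<in>U. f z = f x)"
      using classes openin_alex_class mem_alex_class_self[OF x] by blast
    show "closedin Y {f x}"
      using classes x by blast
  qed
qed

lemma continuous_map_if_closed_graph:
  assumes "closed_graph X Y f" and "f ` topspace X \<subseteq> topspace Y"
  shows "continuous_map X Y f"
proof (rule continuous_map_if_locally_constant[OF assms(2)])
  fix x assume x: "x \<in> topspace X"
  have "\<forall>z\<in>alex_class X x. f z = f x"
    using assms closed_graph_iff_constant_on_alex_classes x by blast
  then show "\<exists>U. openin X U \<and> x \<in> U \<and> (\<forall>z\<in>U. f z = f x)"
    using openin_alex_class mem_alex_class_self[OF x] by blast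
qed

end

theorem theorem3p5:
  fixes X :: "'a topology" and Y :: "'b topology" and f :: "'a \<Rightarrow> 'b"
  assumes "alexandroff_space X"
    and "f ` topspace X \<subseteq> topspace Y"
  shows "(closed_graph X Y f \<longleftrightarrow>
            (\<forall>C\<in>connected_components_of X. singleton_closed Y (f ` C)))
       \<and> ((\<forall>C\<in>connected_components_of X. singleton_closed Y (f ` C)) \<longleftrightarrow>
            (\<forall>x\<in>topspace X. singleton_closed Y (f ` alex_class X x)))
       \<and> (closed_graph X Y f \<longrightarrow> continuous_map X Y f)"
proof -
  have "connected_components_of X = alex_class X ` topspace X"
    unfolding connected_components_of_def
    by (rule image_cong) (simp_all add: connected_component_of_set_eq_alex_class[OF assms(1)])
  then have "(\<forall>C\<in>connected_components_of X. singleton_closed Y (f ` C)) \<longleftrightarrow>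
      (\<forall>x\<in>topspace X. singleton_closed Y (f ` alex_class X x))"
    by simp
  moreover have "(\<forall>x\<in>topspace X. singleton_closed Y (f ` alex_class X x)) \<longleftrightarrow>
      (\<forall>x\<in>topspace X. (\<forall>z\<in>alex_class X x. f z = f x) \<and> closedin Y {f x})"
    by (rule ball_cong[OF refl singleton_closed_image_iff[OF mem_alex_class_self]])
  moreover note closed_graph_iff_constant_on_alex_classes[OF assms]
    continuous_map_if_closed_graph[OF assms(1) _ assms(2)]
  ultimately show ?thesis
    by blast
qed

end
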